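(* Consider a ground terminal at $(p,q,h_0)$ and a UAV at $(x,y,z)$ with the altitude $z>h_0$ fixed, and let $d(x,y)=\sqrt{(x-p)^2+(y-q)^2+(z-h_0)^2}$. Let $a,b>0$, $0<\eta_{LoS}<\eta_{NLoS}$, $L>0$ and $G>0$ be constants, and define on $\mathbb{R}^2$ \[ \theta(x,y)=\tfrac{180}{\pi}\arcsin\!\Big(\tfrac{z-h_0}{d(x,y)}\Big),\quad PR(x,y)=\frac{1}{1+a\exp(-b(\theta(x,y)-a))}, \] \[ h(x,y)=\frac{G}{d(x,y)^2L\big(PR(x,y)\,\eta_{LoS}+(1-PR(x,y))\,\eta_{NLoS}\big)}. \] Fix a reference point $(x^0,y^0)\neq(p,q)$ and set $C=d(x^0,y^0)/(z-h_0)>1$. Define \[ \bar\theta(x,y)=\tfrac{180}{\pi}\Big(\arcsin(1/C)-\tfrac{1}{C\sqrt{C^2-1}}\big(\tfrac{d(x,y)}{z-h_0}-C\big)\Big),\qquad D=1+a\exp\big(-b(\bar\theta(x^0,y^0)-a)\big), \] \[ \overline{PR}(x,y)=\frac{2}{D}-\frac{1}{D^2}-\frac{a}{D^2}\exp\big(-b(\bar\theta(x,y)-a)\big),\qquad \Lambda(x,y)=d(x,y)^2L\big(\overline{PR}(x,y)\,\eta_{LoS}+(1-\overline{PR}(x,y))\,\eta_{NLoS}\big), \] and, with $\Lambda_0=\Lambda(x^0,y^0)$, \[ H(x,y)=G\Big(\frac{2}{\Lambda_0}-\frac{\Lambda(x,y)}{\Lambda_0^2}\Big). \] Then $H(x,y)\le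 h(x,y)$ for all $(x,y)\in\mathbb{R}^2$, and $H$ is concave on $\mathbb{R}^2$. In particular this holds for the UAV–BS channel gain $h_{U,B}^k$ (terminal at $(0,0,H_B)$, $G=|g_{U,B}^k|^2$, $L=L^k$) with its approximation $H_{U,B}^k$, and for the UAV–UE-$n$ channel gain $h_{n,U}^k$ (terminal at $(x_n,y_n,0)$, $G=|g_{U,n}^k|^2$, $L=L^k$) with its approximation $H_{n,U}^k$.
   Context: This is the air-to-ground channel model: $\theta$ is the elevation angle in degrees, $PR$ the line-of-sight probability with environment constants $a,b$, $\eta_{LoS},\eta_{NLoS}$ are the (linear-scale) additional attenuation factors of LoS/NLoS links, $L^k=(4\pi f^k/c)^2$ is the free-space pathloss factor of subchannel $k$, and $|g|^2>0$ is the (fixed) small-scale fading power. The BS is at $(0,0,H_B)$, UE $n$ at $(x_n,y_n,0)$, and the UAV altitude is above the terminal. The reference point $(x^0,y^0)$ is the horizontal UAV position from the previous iteration of a successive convex programming procedure. *)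

theory Defs
  imports "HOL-Analysis.Analysis"
begin

definition dUT :: "real \<Rightarrow> real \<Rightarrow> real \<Rightarrow> real \<Rightarrow> real \<Rightarrow> real \<Rightarrow> real" where
  "dUT p q h0 z x y = sqrt ((x - p)^2 + (y - q)^2 + (z - h0)^2)"

definition elev :: "real \<Rightarrow> real \<Rightarrow> real \<Rightarrow> real \<Rightarrow> real \<Rightarrow> real \<Rightarrow> real" where
  "elev p q h0 z x y = (180 / pi) * arcsin ((z - h0) / dUT p q h0 z x y)"

definition PRfun :: "real \<Rightarrow> real \<Rightarrow> real \<Rightarrow> real" where
  "PRfun a b th = 1 / (1 + a * exp (- b * (th - a)))"

definition gain :: "real \<Rightarrow> real \<Rightarrow> real \<Rightarrow> real \<Rightarrow> real \<Rightarrow> real \<Rightarrow> real \<Rightarrow> real \<Rightarrow> real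
                    \<Rightarrow> real \<Rightarrow> real \<Rightarrow> real \<Rightarrow> real" where
  "gain p q h0 z a b etaL etaN L G x y =
     (let d = dUT p q h0 z x y; P = PRfun a b (elev p q h0 z x y)
      in G / (d^2 * L * (P * etaL + (1 - P) * etaN)))"

definition Cref :: "real \<Rightarrow> real \<Rightarrow> real \<Rightarrow> real \<Rightarrow> real \<Rightarrow> real \<Rightarrow> real" where
  "Cref p q h0 z x0 y0 = dUT p q h0 z x0 y0 / (z - h0)"

definition elevbar :: "real \<Rightarrow> real \<Rightarrow> real \<Rightarrow> real \<Rightarrow> real \<Rightarrow> real \<Rightarrow> real \<Rightarrow> real \<Rightarrow> real" where
  "elevbar p q h0 z x0 y0 x y =
     (let C = Cref p q h0 z x0 y0
      in (180 / pi) * (arcsin (1 / C)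
           - 1 / (C * sqrt (C^2 - 1)) * (dUT p q h0 z x y / (z - h0) - C)))"

definition Dref :: "real \<Rightarrow> real \<Rightarrow> real \<Rightarrow> real \<Rightarrow> real \<Rightarrow> real \<Rightarrow> real \<Rightarrow> real \<Rightarrow> real" where
  "Dref p q h0 z a b x0 y0 = 1 + a * exp (- b * (elevbar p q h0 z x0 y0 x0 y0 - a))"

definition PRbar :: "real \<Rightarrow> real \<Rightarrow> real \<Rightarrow> real \<Rightarrow> real \<Rightarrow> real \<Rightarrow> real \<Rightarrow> real
                    \<Rightarrow> real \<Rightarrow> real \<Rightarrow> real" where
  "PRbar p q h0 z a b x0 y0 x y =
     (let D = Dref p q h0 z a b x0 y0
      in 2 / D - 1 / D^2 - a / D^2 * exp (- b * (elevbar p q h0 z x0 y0 x y - a)))"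

definition Lam :: "real \<Rightarrow> real \<Rightarrow> real \<Rightarrow> real \<Rightarrow> real \<Rightarrow> real \<Rightarrow> real \<Rightarrow> real \<Rightarrow> real
                    \<Rightarrow> real \<Rightarrow> real \<Rightarrow> real \<Rightarrow> real \<Rightarrow> real" where
  "Lam p q h0 z a b etaL etaN L x0 y0 x y =
     (let P = PRbar p q h0 z a b x0 y0 x y
      in (dUT p q h0 z x y)^2 * L * (P * etaL + (1 - P) * etaN))"

definition Happrox :: "real \<Rightarrow> real \<Rightarrow> real \<Rightarrow> real \<Rightarrow> real \<Rightarrow> real \<Rightarrow> real \<Rightarrow> real \<Rightarrow> real
                    \<Rightarrow> real \<Rightarrow> real \<Rightarrow> real \<Rightarrow> real \<Rightarrow> real \<Rightarrow> real" where
  "Happrox p q h0 z a b etaL etaN L G x0 y0 x y =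
     (let L0 = Lam p q h0 z a b etaL etaN L x0 y0 x0 y0
      in G * (2 / L0 - Lam p q h0 z a b etaL etaN L x0 y0 x y / L0^2))"

end

(* Both claims rest on tangent lines of convex functions. Since u \<mapsto> arcsin (1/u) is convex
   on [1, \<infinity>), its tangent at C gives elevbar \<le> elev; since PR increases with the angle and
   s \<mapsto> 1/s is convex, the tangent of 1/s at D gives PRbar \<le> PR(elevbar) \<le> PR(elev), so with
   etaL < etaN the surrogate Lam dominates the true path loss; the tangent of 1/s at Lam(x0,y0)
   then gives H \<le> G/Lam \<le> h. For concavity, elevbar is affine in the distance d, so
   Lam = A d^2 + B d^2 exp (c + g d) with A, B, g \<ge> 0: a convex nondecreasing function of the
   convex function d. *)

theory Submission
  imports Defs
begin

lemma has_real_derivative_arcsin_inverse: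
  fixes u :: real
  assumes "u > 1"
  shows "((\<lambda>u. arcsin (1 / u)) has_real_derivative - (1 / (u * sqrt (u\<^sup>2 - 1)))) (at u)"
proof -
  have "1 / u < 1" "-1 < 1 / u"
    using assms by (auto simp: less_divide_eq)
  then have "((\<lambda>u. arcsin (1 / u)) has_real_derivative
               inverse (sqrt (1 - (1 / u)\<^sup>2)) * (- 1 / u\<^sup>2)) (at u)"
    using assms by (auto intro!: derivative_eq_intros simp: power2_eq_square)
  moreover have "sqrt (1 - (1 / u)\<^sup>2) = sqrt (u\<^sup>2 - 1) / u"
  proof -
    have "1 - (1 / u)\<^sup>2 = (u\<^sup>2 - 1) / u\<^sup>2"
      using assms by (simp add: field_simps)
    then show ?thesis
      using assms by (simp add: real_sqrt_divide)
  qed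
  moreover have "sqrt (u\<^sup>2 - 1) > 0"
    using assms by (simp add: power_less_one_iff)
  ultimately show ?thesis
    using assms by (simp add: field_simps power2_eq_square)
qed

lemma convex_on_arcsin_inverse: "convex_on {1<..} (\<lambda>u::real. arcsin (1 / u))"
proof (rule convex_on_realI)
  show "- (1 / (u * sqrt (u\<^sup>2 - 1))) \<le> - (1 / (v * sqrt (v\<^sup>2 - 1)))"
    if "u \<in> {1<..}" "v \<in> {1<..}" "u \<le> v" for u v :: real
  proof -
    have "u * sqrt (u\<^sup>2 - 1) \<le> v * sqrt (v\<^sup>2 - 1)"
      using that by (intro mult_mono real_sqrt_le_mono power_mono) auto
    moreover have "0 < u * sqrt (u\<^sup>2 - 1)"
      using that by (simp add: power_less_one_iff)
    ultimately show ?thesis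
      by (simp add: divide_left_mono)
  qed
qed (auto intro: has_real_derivative_arcsin_inverse)

lemma arcsin_inverse_ge_tangent:
  fixes u C :: real
  assumes "1 \<le> u" and "1 < C"
  shows "arcsin (1 / C) - 1 / (C * sqrt (C\<^sup>2 - 1)) * (u - C) \<le> arcsin (1 / u)"
proof -
  define f where "f u = arcsin (1 / u) - arcsin (1 / C) + 1 / (C * sqrt (C\<^sup>2 - 1)) * (u - C)" for u
  \<comment> \<open>arcsin (1/u) is not differentiable at u = 1, so that point is reached by continuity.\<close>
  have "0 \<le> f v" if "v \<in> {1<..}" for v
    using convex_on_imp_above_tangent[OF convex_on_arcsin_inverse _ _ _
        has_field_derivative_at_within[OF has_real_derivative_arcsin_inverse], of C v]
      that assms
    by (simp add: f_def algebra_simps interior_open)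
  moreover have "continuous_on {1..} f"
    unfolding f_def by (intro continuous_intros) (auto simp: divide_le_eq le_divide_eq)
  ultimately have "0 \<le> f u"
    using continuous_ge_on_closure[of "{1<..}" f u 0] assms by auto
  then show ?thesis
    by (simp add: f_def)
qed

lemma PRfun_mono:
  fixes a b \<theta> \<theta>' :: real
  assumes "0 < a" "0 \<le> b" "\<theta> \<le> \<theta>'"
  shows "PRfun a b \<theta> \<le> PRfun a b \<theta>'"
proof -
  have "a * exp (- b * (\<theta>' - a)) \<le> a * exp (- b * (\<theta> - a))"
    using assms by (simp add: mult_left_mono)
  moreover have "0 < 1 + a * exp t" for t
    using assms(1) by (simp add: add_pos_pos)
  ultimately show ?thesis
    unfolding PRfun_def by (intro divide_left_mono) (auto simp: mult_pos_pos)
qed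

lemma PRfun_bounds:
  fixes a b \<theta> :: real
  assumes "0 \<le> a"
  shows "0 \<le> PRfun a b \<theta>" "PRfun a b \<theta> \<le> 1"
proof -
  have "1 \<le> 1 + a * exp (- b * (\<theta> - a))"
    using assms by simp
  then show "0 \<le> PRfun a b \<theta>" "PRfun a b \<theta> \<le> 1"
    unfolding PRfun_def by auto
qed

lemma inverse_ge_tangent:
  fixes s s0 :: real
  assumes "0 < s" "0 < s0"
  shows "2 / s0 - s / s0\<^sup>2 \<le> 1 / s"
proof -
  have "1 / s - (2 / s0 - s / s0\<^sup>2) = (s - s0)\<^sup>2 / (s * s0\<^sup>2)"
    using assms by (simp add: field_simps power2_eq_square)
  also have "\<dots> \<ge> 0"
    using assms by simp
  finally show ?thesis
    by simp
qed

lemma mixture_antimono: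
  fixes P P' etaL etaN :: real
  assumes "P \<le> P'" "etaL \<le> etaN"
  shows "P' * etaL + (1 - P') * etaN \<le> P * etaL + (1 - P) * etaN"
proof -
  have "P * etaL + (1 - P) * etaN - (P' * etaL + (1 - P') * etaN) = (P' - P) * (etaN - etaL)"
    by (simp add: algebra_simps)
  then show ?thesis
    using assms by (metis diff_ge_0_iff_ge zero_le_mult_iff)
qed

lemma mixture_pos:
  fixes P etaL etaN :: real
  assumes "0 \<le> P" "P \<le> 1" "0 < etaL" "etaL \<le> etaN"
  shows "0 < P * etaL + (1 - P) * etaN"
  using mixture_antimono[OF \<open>P \<le> 1\<close> \<open>etaL \<le> etaN\<close>] assms by simp

lemma dUT_ge_altitude:
  fixes p q h0 z x y :: real
  assumes "h0 < z"
  shows "z - h0 \<le> dUT p q h0 z x y"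
proof -
  have "sqrt ((z - h0)\<^sup>2) \<le> dUT p q h0 z x y"
    unfolding dUT_def by (intro real_sqrt_le_mono) auto
  then show ?thesis
    using assms by simp
qed

lemma Cref_gt_1:
  fixes p q h0 z x0 y0 :: real
  assumes "h0 < z" "(x0, y0) \<noteq> (p, q)"
  shows "1 < Cref p q h0 z x0 y0"
proof -
  have "0 < (x0 - p)\<^sup>2 + (y0 - q)\<^sup>2"
    using assms(2) by (auto simp: sum_power2_gt_zero_iff)
  then have "sqrt ((z - h0)\<^sup>2) < dUT p q h0 z x0 y0"
    unfolding dUT_def by (intro real_sqrt_less_mono) auto
  then show ?thesis
    using assms(1) unfolding Cref_def by (simp add: less_divide_eq)
qed

lemma elevbar_le_elev:
  fixes p q h0 z x0 y0 x y :: real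
  assumes "h0 < z" "(x0, y0) \<noteq> (p, q)"
  shows "elevbar p q h0 z x0 y0 x y \<le> elev p q h0 z x y"
proof -
  define u where "u = dUT p q h0 z x y / (z - h0)"
  have "1 \<le> u"
    using dUT_ge_altitude[OF assms(1)] assms(1) by (simp add: u_def le_divide_eq)
  from arcsin_inverse_ge_tangent[OF this Cref_gt_1[OF assms]]
  have "180 / pi * (arcsin (1 / Cref p q h0 z x0 y0)
          - 1 / (Cref p q h0 z x0 y0 * sqrt ((Cref p q h0 z x0 y0)\<^sup>2 - 1))
            * (u - Cref p q h0 z x0 y0))
        \<le> 180 / pi * arcsin (1 / u)"
    by (rule mult_left_mono) simp
  then show ?thesis
    unfolding elevbar_def elev_def Let_def u_def by simp
qed

lemma PRbar_le_PRfun_elev: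
  fixes p q h0 z a b x0 y0 x y :: real
  assumes "h0 < z" "(x0, y0) \<noteq> (p, q)" "0 < a" "0 \<le> b"
  shows "PRbar p q h0 z a b x0 y0 x y \<le> PRfun a b (elev p q h0 z x y)"
proof -
  define t where "t = 1 + a * exp (- b * (elevbar p q h0 z x0 y0 x y - a))"
  define D where "D = Dref p q h0 z a b x0 y0"
  have "0 < t" "0 < D"
    using assms(3) by (auto simp: t_def D_def Dref_def intro: add_pos_pos)
  have "PRbar p q h0 z a b x0 y0 x y = 2 / D - t / D\<^sup>2"
    unfolding PRbar_def Let_def D_def[symmetric] t_def by (simp add: add_divide_distrib)
  also have "\<dots> \<le> 1 / t"
    using inverse_ge_tangent[OF \<open>0 < t\<close> \<open>0 < D\<close>] .
  also have "\<dots> = PRfun a b (elevbar p q h0 z x0 y0 x y)"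
    by (simp add: PRfun_def t_def)
  also have "\<dots> \<le> PRfun a b (elev p q h0 z x y)"
    using assms by (intro PRfun_mono elevbar_le_elev) auto
  finally show ?thesis .
qed

definition pathloss :: "real \<Rightarrow> real \<Rightarrow> real \<Rightarrow> real \<Rightarrow> real \<Rightarrow> real \<Rightarrow> real \<Rightarrow> real \<Rightarrow> real
                    \<Rightarrow> real \<Rightarrow> real \<Rightarrow> real" where
  "pathloss p q h0 z a b etaL etaN L x y =
     (let P = PRfun a b (elev p q h0 z x y)
      in (dUT p q h0 z x y)\<^sup>2 * L * (P * etaL + (1 - P) * etaN))"

lemma gain_eq_divide_pathloss:
  "gain p q h0 z a b etaL etaN L G x y = G / pathloss p q h0 z a b etaL etaN L x y"
  unfolding gain_def pathloss_def Let_def ..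

lemma pathloss_pos:
  fixes p q h0 z a b etaL etaN L x y :: real
  assumes "h0 < z" "0 \<le> a" "0 < etaL" "etaL \<le> etaN" "0 < L"
  shows "0 < pathloss p q h0 z a b etaL etaN L x y"
proof -
  have "0 < dUT p q h0 z x y"
    using dUT_ge_altitude[OF assms(1), of p q x y] assms(1) by linarith
  then show ?thesis
    unfolding pathloss_def Let_def
    using mixture_pos[OF PRfun_bounds[OF assms(2)] assms(3,4)] assms(5) by simp
qed

lemma pathloss_le_Lam:
  fixes p q h0 z a b etaL etaN L x0 y0 x y :: real
  assumes "h0 < z" "(x0, y0) \<noteq> (p, q)" "0 < a" "0 \<le> b" "etaL \<le> etaN" "0 \<le> L"
  shows "pathloss p q h0 z a b etaL etaN L x y \<le> Lam p q h0 z a b etaL etaN L x0 y0 x y"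
  unfolding pathloss_def Lam_def Let_def
  using mixture_antimono[OF PRbar_le_PRfun_elev[OF assms(1-4)] assms(5)] assms(6)
  by (intro mult_left_mono) auto

lemma convex_on_compose_mono:
  fixes d :: "'a::real_vector \<Rightarrow> real" and \<phi> :: "real \<Rightarrow> real"
  assumes "convex_on UNIV d" "\<And>v. 0 \<le> d v" "convex_on {0..} \<phi>" "mono_on {0..} \<phi>"
  shows "convex_on UNIV (\<lambda>v. \<phi> (d v))"
proof (rule convex_onI)
  fix t :: real and x y :: 'a
  assume t: "0 < t" "t < 1"
  have "d ((1 - t) *\<^sub>R x + t *\<^sub>R y) \<le> (1 - t) * d x + t * d y"
    using convex_onD[OF assms(1)] t by auto
  then have "\<phi> (d ((1 - t) *\<^sub>R x + t *\<^sub>R y)) \<le> \<phi> ((1 - t) * d x + t * d y)"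
    using assms(2,4) t by (intro mono_onD[OF assms(4)]) auto
  also have "\<dots> \<le> (1 - t) * \<phi> (d x) + t * \<phi> (d y)"
    using convex_onD[OF assms(3), of t "d x" "d y"] t assms(2) by simp
  finally show "\<phi> (d ((1 - t) *\<^sub>R x + t *\<^sub>R y)) \<le> (1 - t) * \<phi> (d x) + t * \<phi> (d y)" .
qed simp

lemma convex_on_dUT: "convex_on UNIV (\<lambda>v. dUT p q h0 z (fst v) (snd v))"
proof (rule convex_onI)
  define f where "f v = ((fst v - p, snd v - q), z - h0)" for v :: "real \<times> real"
  have dUT_eq: "dUT p q h0 z (fst v) (snd v) = norm (f v)" for v
    by (simp add: f_def dUT_def norm_Pair)
  fix t :: real and x y :: "real \<times> real"
  assume "0 < t" "t < 1"
  have "f ((1 - t) *\<^sub>R x + t *\<^sub>R y) = (1 - t) *\<^sub>R f x + t *\<^sub>R f y"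
    by (simp add: f_def algebra_simps)
  then have "norm (f ((1 - t) *\<^sub>R x + t *\<^sub>R y)) \<le> (1 - t) * norm (f x) + t * norm (f y)"
    using norm_triangle_ineq[of "(1 - t) *\<^sub>R f x" "t *\<^sub>R f y"] \<open>0 < t\<close> \<open>t < 1\<close> by simp
  then show "dUT p q h0 z (fst ((1 - t) *\<^sub>R x + t *\<^sub>R y)) (snd ((1 - t) *\<^sub>R x + t *\<^sub>R y))
      \<le> (1 - t) * dUT p q h0 z (fst x) (snd x) + t * dUT p q h0 z (fst y) (snd y)"
    unfolding dUT_eq .
qed simp

lemma convex_on_square_exp:
  fixes c g :: real
  assumes "0 \<le> g"
  shows "convex_on {0..} (\<lambda>s. s\<^sup>2 * exp (c + g * s))"
proof (rule f''_ge0_imp_convex)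
  show "((\<lambda>s. s\<^sup>2 * exp (c + g * s)) has_real_derivative
        (2 * s + g * s\<^sup>2) * exp (c + g * s)) (at s)" for s
    by (auto intro!: derivative_eq_intros simp: algebra_simps power2_eq_square)
  show "((\<lambda>s. (2 * s + g * s\<^sup>2) * exp (c + g * s)) has_real_derivative
        (2 + 4 * g * s + g\<^sup>2 * s\<^sup>2) * exp (c + g * s)) (at s)" for s
    by (auto intro!: derivative_eq_intros simp: algebra_simps power2_eq_square)
  show "0 \<le> (2 + 4 * g * s + g\<^sup>2 * s\<^sup>2) * exp (c + g * s)" if "s \<in> {0..}" for s
    using that assms by simp
qed auto

lemma mono_on_square_exp:
  fixes c g :: real
  assumes "0 \<le> g"
  shows "mono_on {0..} (\<lambda>s. s\<^sup>2 * exp (c + g * s))"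
  using assms by (intro mono_onI mult_mono power_mono) (auto intro: mult_left_mono)

lemma Lam_eq_square_exp_dUT:
  fixes p q h0 z a b etaL etaN L x0 y0 :: real
  assumes "h0 < z" "(x0, y0) \<noteq> (p, q)" "0 < a" "0 \<le> b" "0 \<le> etaL" "etaL \<le> etaN" "0 \<le> L"
  obtains A B c g :: real where "0 \<le> A" "0 \<le> B" "0 \<le> g"
    "\<And>x y. Lam p q h0 z a b etaL etaN L x0 y0 x y =
       A * (dUT p q h0 z x y)\<^sup>2 + B * ((dUT p q h0 z x y)\<^sup>2 * exp (c + g * dUT p q h0 z x y))"
proof
  define C where "C = Cref p q h0 z x0 y0"
  define D where "D = Dref p q h0 z a b x0 y0"
  define m where "m = 2 / D - 1 / D\<^sup>2"
  have "1 < C" "0 < z - h0"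
    using Cref_gt_1[OF assms(1,2)] assms(1) by (simp_all add: C_def)
  then have "0 < sqrt (C\<^sup>2 - 1)"
    by (simp add: power_less_one_iff)
  have "1 \<le> D"
    using assms(3) by (simp add: D_def Dref_def)
  have "1 - m = (1 - 1 / D)\<^sup>2"
    using \<open>1 \<le> D\<close> by (simp add: m_def field_simps power2_eq_square)
  then have "m \<le> 1"
    by (metis diff_ge_0_iff_ge zero_le_power2)
  have "0 \<le> m"
    using \<open>1 \<le> D\<close> by (simp add: m_def field_simps power2_eq_square)
  show "0 \<le> L * (m * etaL + (1 - m) * etaN)"
    using \<open>0 \<le> m\<close> \<open>m \<le> 1\<close> assms(5-7) by simp
  show "0 \<le> L * (etaN - etaL) * a / D\<^sup>2"
    using assms(3,6,7) by simp
  show "0 \<le> b * (180 / pi) / (C * sqrt (C\<^sup>2 - 1) * (z - h0))"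
    using assms(4) \<open>1 < C\<close> \<open>0 < z - h0\<close> \<open>0 < sqrt (C\<^sup>2 - 1)\<close> by simp
  fix x y
  define d where "d = dUT p q h0 z x y"
  define E where "E = - b * (elevbar p q h0 z x0 y0 x y - a)"
  have E_eq: "E = - b * ((180 / pi) * (arcsin (1 / C) + 1 / sqrt (C\<^sup>2 - 1)) - a)
          + b * (180 / pi) / (C * sqrt (C\<^sup>2 - 1) * (z - h0)) * d"
  proof -
    have "- b * (K * (arcsin (1 / C) - 1 / (C * s) * (d / w - C)) - a)
          = - b * (K * (arcsin (1 / C) + 1 / s) - a) + b * K / (C * s * w) * d"
      if "0 < s" "0 < w" for K s w :: real
      using that \<open>1 < C\<close> by (simp add: field_simps)
    from this[OF \<open>0 < sqrt (C\<^sup>2 - 1)\<close> \<open>0 < z - h0\<close>] show ?thesis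
      unfolding E_def elevbar_def Let_def C_def[symmetric] d_def[symmetric] .
  qed
  have "Lam p q h0 z a b etaL etaN L x0 y0 x y
        = d\<^sup>2 * L * ((m - a / D\<^sup>2 * exp E) * etaL + (1 - (m - a / D\<^sup>2 * exp E)) * etaN)"
    unfolding Lam_def PRbar_def Let_def D_def[symmetric] d_def[symmetric] m_def E_def ..
  also have "\<dots> = L * (m * etaL + (1 - m) * etaN) * d\<^sup>2 + L * (etaN - etaL) * a / D\<^sup>2 * (d\<^sup>2 * exp E)"
    by (simp add: algebra_simps diff_divide_distrib)
  finally show "Lam p q h0 z a b etaL etaN L x0 y0 x y =
      L * (m * etaL + (1 - m) * etaN) * d\<^sup>2
      + L * (etaN - etaL) * a / D\<^sup>2 * (d\<^sup>2 * exp (- b * ((180 / pi) * (arcsin (1 / C)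
          + 1 / sqrt (C\<^sup>2 - 1)) - a) + b * (180 / pi) / (C * sqrt (C\<^sup>2 - 1) * (z - h0)) * d))"
    unfolding E_eq .
qed

lemma convex_on_Lam:
  fixes p q h0 z a b etaL etaN L x0 y0 :: real
  assumes "h0 < z" "(x0, y0) \<noteq> (p, q)" "0 < a" "0 \<le> b" "0 \<le> etaL" "etaL \<le> etaN" "0 \<le> L"
  shows "convex_on UNIV (\<lambda>v. Lam p q h0 z a b etaL etaN L x0 y0 (fst v) (snd v))"
proof -
  obtain A B c g :: real where "0 \<le> A" "0 \<le> B" "0 \<le> g" and Lam_eq:
    "\<And>x y. Lam p q h0 z a b etaL etaN L x0 y0 x y =
       A * (dUT p q h0 z x y)\<^sup>2 + B * ((dUT p q h0 z x y)\<^sup>2 * exp (c + g * dUT p q h0 z x y))"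
    using Lam_eq_square_exp_dUT[OF assms] by metis
  define \<phi> where "\<phi> s = A * s\<^sup>2 + B * (s\<^sup>2 * exp (c + g * s))" for s :: real
  have "convex_on {0..} (\<lambda>s::real. s\<^sup>2)"
    by (rule convex_on_subset[OF convex_power2]) auto
  then have "convex_on {0..} \<phi>"
    unfolding \<phi>_def using \<open>0 \<le> A\<close> \<open>0 \<le> B\<close>
    by (intro convex_on_add convex_on_cmul convex_on_square_exp[OF \<open>0 \<le> g\<close>])
  moreover have "mono_on {0..} \<phi>"
  proof (rule mono_onI)
    fix s t :: real
    assume "s \<in> {0..}" "t \<in> {0..}" "s \<le> t"
    then have "s\<^sup>2 \<le> t\<^sup>2" "s\<^sup>2 * exp (c + g * s) \<le> t\<^sup>2 * exp (c + g * t)"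
      using mono_onD[OF mono_on_square_exp[OF \<open>0 \<le> g\<close>]] by (auto intro: power_mono)
    then show "\<phi> s \<le> \<phi> t"
      unfolding \<phi>_def using \<open>0 \<le> A\<close> \<open>0 \<le> B\<close> by (intro add_mono mult_left_mono)
  qed
  moreover have "0 \<le> dUT p q h0 z (fst v) (snd v)" for v
    by (simp add: dUT_def)
  ultimately have "convex_on UNIV (\<lambda>v. \<phi> (dUT p q h0 z (fst v) (snd v)))"
    by (intro convex_on_compose_mono[OF convex_on_dUT])
  then show ?thesis
    unfolding Lam_eq \<phi>_def .
qed

lemma Lam_pos:
  fixes p q h0 z a b etaL etaN L x0 y0 x y :: real
  assumes "h0 < z" "(x0, y0) \<noteq> (p, q)" "0 < a" "0 \<le> b" "0 < etaL" "etaL \<le> etaN" "0 < L"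
  shows "0 < Lam p q h0 z a b etaL etaN L x0 y0 x y"
  using pathloss_pos[of h0 z a etaL etaN L p q b x y] pathloss_le_Lam[of h0 z x0 y0 p q a b etaL etaN L x y]
    assms by simp

lemma Happrox_eq:
  "Happrox p q h0 z a b etaL etaN L G x0 y0 x y
   = G * (2 / Lam p q h0 z a b etaL etaN L x0 y0 x0 y0
          - Lam p q h0 z a b etaL etaN L x0 y0 x y / (Lam p q h0 z a b etaL etaN L x0 y0 x0 y0)\<^sup>2)"
  unfolding Happrox_def Let_def ..

lemma Happrox_le_gain:
  fixes p q h0 z a b etaL etaN L G x0 y0 x y :: real
  assumes "h0 < z" "(x0, y0) \<noteq> (p, q)" "0 < a" "0 \<le> b" "0 < etaL" "etaL \<le> etaN" "0 < L" "0 \<le> G"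
  shows "Happrox p q h0 z a b etaL etaN L G x0 y0 x y \<le> gain p q h0 z a b etaL etaN L G x y"
proof -
  let ?\<Lambda> = "Lam p q h0 z a b etaL etaN L x0 y0"
  have "Happrox p q h0 z a b etaL etaN L G x0 y0 x y \<le> G * (1 / ?\<Lambda> x y)"
    unfolding Happrox_eq using assms
    by (intro mult_left_mono inverse_ge_tangent Lam_pos) auto
  also have "\<dots> \<le> G / pathloss p q h0 z a b etaL etaN L x y"
    using pathloss_pos[of h0 z a etaL etaN L p q b x y] pathloss_le_Lam[of h0 z x0 y0 p q a b etaL etaN L x y]
      assms by (simp add: divide_left_mono)
  finally show ?thesis
    by (simp only: gain_eq_divide_pathloss)
qed

lemma concave_on_Happrox:
  fixes p q h0 z a b etaL etaN L G x0 y0 :: real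
  assumes "h0 < z" "(x0, y0) \<noteq> (p, q)" "0 < a" "0 \<le> b" "0 < etaL" "etaL \<le> etaN" "0 < L" "0 \<le> G"
  shows "concave_on UNIV (\<lambda>(x, y). Happrox p q h0 z a b etaL etaN L G x0 y0 x y)"
proof -
  let ?\<Lambda> = "Lam p q h0 z a b etaL etaN L x0 y0"
  define \<Lambda>0 where "\<Lambda>0 = ?\<Lambda> x0 y0"
  have "convex_on UNIV (\<lambda>v. G / \<Lambda>0\<^sup>2 * ?\<Lambda> (fst v) (snd v) + - (2 * G / \<Lambda>0))"
    using assms by (intro convex_on_add convex_on_cmul convex_on_Lam) (auto simp: convex_on_const)
  moreover have "(\<lambda>v. G / \<Lambda>0\<^sup>2 * ?\<Lambda> (fst v) (snd v) + - (2 * G / \<Lambda>0))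
      = (\<lambda>v. - (case v of (x, y) \<Rightarrow> Happrox p q h0 z a b etaL etaN L G x0 y0 x y))"
    by (auto simp: fun_eq_iff Happrox_eq \<Lambda>0_def right_diff_distrib)
  ultimately show ?thesis
    unfolding concave_on_def by simp
qed

theorem theorem1:
  fixes p q h0 z a b etaL etaN L G x0 y0 :: real
  assumes "z > h0"
    and "a > 0" and "b > 0"
    and "0 < etaL" and "etaL < etaN"
    and "L > 0" and "G > 0"
    and "(x0, y0) \<noteq> (p, q)"
  shows "(\<forall>x y. Happrox p q h0 z a b etaL etaN L G x0 y0 x y \<le> gain p q h0 z a b etaL etaN L G x y)
       \<and> concave_on UNIV (\<lambda>(x, y). Happrox p q h0 z a b etaL etaN L G x0 y0 x y)"
  using assms by (simp add: Happrox_le_gain concave_on_Happrox)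

end
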